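(* Let $V$ be a finite-dimensional real vector space with a seminorm $|\cdot|_V$, and let $\sigma$ be a zonal representation of $|\cdot|_V$. Then for every set $X$, every $\sigma$-algebra $\Sigma$ on $X$, every vector measure $\mu:\Sigma\to V$ and every $A\in\Sigma$, $$|\mu|_V(A)=\int_{V'}|\langle\eta,\mu\rangle|_{\mathbb{R}}(A)\,d\sigma(\eta).$$
   Context: $V'$ is the set of linear forms $\eta$ on $V$ with finite dual seminorm $|\eta|_{V'}=\sup\{\eta(v):|v|_V\le1\}$. A zonal representation of $|\cdot|_V$ is a locally finite nonnegative Borel measure $\sigma$ on $V'$ such that $\int_{V'}|\eta|_{V'}\,d\sigma(\eta)<\infty$ and $|v|_V=\int_{V'}|\eta(v)|\,d\sigma(\eta)$ for all $v\in V$. A vector measure is a countably additive map $\mu:\Sigma\to V$; total variation: $|\mu|_V(A)=\sup\{\sum_{i=1}^m|\mu(E_i)|_V : E_1,\dots,E_m\in\Sigma \text{ pairwise disjoint subsets of } A\}$. For $\eta\in V'$, $\langle\eta,\mu\rangle$ is the signed measure $E\mapsto\eta(\mu(E))$ and $|\langle\eta,\mu\rangle|_{\mathbb{R}}$ its total variation with respect to the absolute value. *)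

theory Defs
  imports "HOL-Analysis.Analysis"
begin

definition is_seminorm :: "('v::real_vector \<Rightarrow> real) \<Rightarrow> bool" where
  "is_seminorm p \<longleftrightarrow> (\<forall>x y. p (x + y) \<le> p x + p y) \<and> (\<forall>c x. p (c *\<^sub>R x) = \<bar>c\<bar> * p x)"

text \<open>Linear forms on V with finite dual seminorm (V').  On a finite-dimensional
  space every linear form is bounded, so linear forms are the bounded linear forms.\<close>
definition dual_space :: "('v::real_normed_vector \<Rightarrow> real) \<Rightarrow> ('v \<Rightarrow>\<^sub>L real) set" where
  "dual_space p = {\<eta>. bdd_above {blinfun_apply \<eta> v | v. p v \<le> 1}}"

definition dual_seminorm :: "('v::real_normed_vector \<Rightarrow> real) \<Rightarrow> ('v \<Rightarrow>\<^sub>L real) \<Rightarrow> real" where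
  "dual_seminorm p \<eta> = Sup {blinfun_apply \<eta> v | v. p v \<le> 1}"

definition zonal_representation ::
  "('v::euclidean_space \<Rightarrow> real) \<Rightarrow> ('v \<Rightarrow>\<^sub>L real) measure \<Rightarrow> bool" where
  "zonal_representation p \<sigma> \<longleftrightarrow>
     sets \<sigma> = sets (restrict_space borel (dual_space p)) \<and>
     (\<forall>\<eta>\<in>dual_space p. \<exists>U. open U \<and> \<eta> \<in> U \<and> emeasure \<sigma> (U \<inter> dual_space p) < \<infinity>) \<and>
     (\<integral>\<^sup>+ \<eta>. ennreal (dual_seminorm p \<eta>) \<partial>\<sigma>) < \<infinity> \<and>
     (\<forall>v. ennreal (p v) = (\<integral>\<^sup>+ \<eta>. ennreal \<bar>blinfun_apply \<eta> v\<bar> \<partial>\<sigma>))"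

definition vector_measure :: "'a measure \<Rightarrow> ('a set \<Rightarrow> 'v::{topological_space, comm_monoid_add}) \<Rightarrow> bool" where
  "vector_measure M \<mu> \<longleftrightarrow>
     (\<forall>F. range F \<subseteq> sets M \<longrightarrow> disjoint_family F \<longrightarrow> (\<lambda>n. \<mu> (F n)) sums \<mu> (\<Union>n. F n))"

definition total_variation ::
  "('v \<Rightarrow> real) \<Rightarrow> 'a measure \<Rightarrow> ('a set \<Rightarrow> 'v) \<Rightarrow> 'a set \<Rightarrow> ennreal" where
  "total_variation q M \<mu> A =
     (SUP EE \<in> {(m::nat, E). (\<forall>i<m. E i \<in> sets M \<and> E i \<subseteq> A) \<and> disjoint_family_on E {..<m}}.
        (\<Sum>i<fst EE. ennreal (q (\<mu> (snd EE i)))))"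

end

(*
  For finitely many disjoint E_i, integrating the zonal identity
  |\<mu>(E_i)|_V = \<integral> |\<eta>(\<mu>(E_i))| d\<sigma>(\<eta>) and summing gives one inequality after taking
  suprema.  For the converse the supremum has to be exchanged with the integral.  Since any
  two partitions have a common refinement and refining only increases the sums, one
  increasing sequence of partitions realises the total variations of countably many scalar
  measures <\<eta>,\<mu>> at once, and monotone convergence applies along it.  Finally
  \<eta> \<mapsto> |<\<eta>,\<mu>>|(A) is a seminorm on V', finite when |\<mu>|_V(A) is, so agreement on a
  countable dense set of \<eta> propagates to all of V'.
*)

theory Submission
  imports Defs
begin

definition finitely_additive :: "'a measure \<Rightarrow> ('a set \<Rightarrow> 'w::comm_monoid_add) \<Rightarrow> bool" where
  "finitely_additive M \<nu> \<longleftrightarrow> \<nu> {} = 0 \<and> additive (sets M) \<nu>"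

definition subpartitions :: "'a measure \<Rightarrow> 'a set \<Rightarrow> 'a set set set" where
  "subpartitions M A = {P. finite P \<and> P \<subseteq> sets M \<and> (\<forall>E\<in>P. E \<subseteq> A) \<and> disjoint P}"

definition variation_sum :: "('w \<Rightarrow> real) \<Rightarrow> ('a set \<Rightarrow> 'w) \<Rightarrow> 'a set set \<Rightarrow> real" where
  "variation_sum q \<nu> P = (\<Sum>E\<in>P. q (\<nu> E))"

definition extend_to_partition :: "'a set \<Rightarrow> 'a set set \<Rightarrow> 'a set set" where
  "extend_to_partition A P = insert (A - \<Union>P) P"

definition partition_meet :: "'a set \<Rightarrow> 'a set set \<Rightarrow> 'a set set \<Rightarrow> 'a set set" where
  "partition_meet A P Q =
     (\<lambda>(E, F). E \<inter> F) ` (extend_to_partition A P \<times> extend_to_partition A Q)"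

lemma vector_measure_finitely_additive:
  fixes \<mu> :: "'a set \<Rightarrow> 'v::real_normed_vector"
  assumes "vector_measure M \<mu>"
  shows "finitely_additive M \<mu>"
proof -
  have "(\<lambda>n. \<mu> {}) sums \<mu> {}"
    using assms[unfolded vector_measure_def, rule_format, of "\<lambda>_. {}"]
    by (simp add: disjoint_family_on_def)
  then have "(\<lambda>n. \<mu> {}) \<longlonglongrightarrow> 0"
    by (intro summable_LIMSEQ_zero sums_summable)
  then have empty: "\<mu> {} = 0"
    by (simp add: LIMSEQ_const_iff)
  have "\<mu> (X \<union> Y) = \<mu> X + \<mu> Y" if "X \<in> sets M" "Y \<in> sets M" "X \<inter> Y = {}" for X Y
  proof -
    define F where "F = (\<lambda>n::nat. if n = 0 then X else if n = 1 then Y else {})"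
    have "range F \<subseteq> sets M" "disjoint_family F"
      using that by (auto simp: F_def disjoint_family_on_def)
    moreover have "(\<Union>n. F n) = X \<union> Y"
      by (auto simp: F_def split: if_splits)
    ultimately have "(\<lambda>n. \<mu> (F n)) sums \<mu> (X \<union> Y)"
      using assms unfolding vector_measure_def by metis
    moreover have "(\<lambda>n. \<mu> (F n)) sums (\<Sum>n\<in>{0,1}. \<mu> (F n))"
      by (rule sums_finite) (auto simp: F_def empty)
    ultimately show ?thesis
      by (auto dest: sums_unique2 simp: F_def)
  qed
  with empty show ?thesis
    by (simp add: finitely_additive_def additive_def)
qed

lemma finitely_additive_blinfun:
  "finitely_additive M \<mu> \<Longrightarrow> finitely_additive M (\<lambda>E. blinfun_apply \<eta> (\<mu> E))"
  by (simp add: finitely_additive_def additive_def blinfun.add_right blinfun.zero_right)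

lemma finitely_additive_sum:
  assumes "finitely_additive M \<nu>" "finite I" "\<And>i. i \<in> I \<Longrightarrow> G i \<in> sets M"
    and "disjoint_family_on G I"
  shows "\<nu> (\<Union>i\<in>I. G i) = (\<Sum>i\<in>I. \<nu> (G i))"
  using assms(2-4)
proof (induction I rule: finite_induct)
  case empty
  then show ?case using assms(1) by (simp add: finitely_additive_def)
next
  case (insert i I)
  have "G i \<inter> (\<Union>j\<in>I. G j) = {}"
    using insert.prems(2) insert.hyps(2) unfolding disjoint_family_on_def by auto
  moreover have "(\<Union>j\<in>I. G j) \<in> sets M"
    using insert by auto
  ultimately have "\<nu> (\<Union>j\<in>insert i I. G j) = \<nu> (G i) + \<nu> (\<Union>j\<in>I. G j)"
    using assms(1) insert.prems(1) unfolding finitely_additive_def additive_def by auto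
  with insert show ?case
    by (simp add: disjoint_family_on_def)
qed

lemma seminorm_scaleR: "is_seminorm p \<Longrightarrow> p (c *\<^sub>R x) = \<bar>c\<bar> * p x"
  by (simp add: is_seminorm_def)

lemma seminorm_triangle: "is_seminorm p \<Longrightarrow> p (x + y) \<le> p x + p y"
  by (simp add: is_seminorm_def)

lemma seminorm_zero: "is_seminorm p \<Longrightarrow> p 0 = 0"
  using seminorm_scaleR[of p 0 0] by simp

lemma seminorm_minus: "is_seminorm p \<Longrightarrow> p (- x) = p x"
  using seminorm_scaleR[of p "-1" x] by simp

lemma seminorm_nonneg:
  assumes "is_seminorm p"
  shows "0 \<le> p x"
proof -
  have "p (x + - x) \<le> p x + p (- x)"
    using assms by (rule seminorm_triangle)
  then show ?thesis
    using seminorm_zero[OF assms] seminorm_minus[OF assms] by simp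
qed

lemma seminorm_sum_le:
  assumes "is_seminorm p"
  shows "p (\<Sum>i\<in>I. f i) \<le> (\<Sum>i\<in>I. p (f i))"
proof (induction I rule: infinite_finite_induct)
  case (insert i I)
  have "p (f i + (\<Sum>j\<in>I. f j)) \<le> p (f i) + p (\<Sum>j\<in>I. f j)"
    using assms by (rule seminorm_triangle)
  with insert show ?case by simp
qed (simp_all add: seminorm_zero[OF assms])

lemma is_seminorm_abs: "is_seminorm (abs :: real \<Rightarrow> real)"
  by (simp add: is_seminorm_def abs_triangle_ineq abs_mult)

lemma variation_sum_nonneg: "is_seminorm q \<Longrightarrow> 0 \<le> variation_sum q \<nu> P"
  by (simp add: variation_sum_def sum_nonneg seminorm_nonneg)

lemma extend_to_partition_subpartition:
  assumes "P \<in> subpartitions M A" "A \<in> sets M"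
  shows "extend_to_partition A P \<in> subpartitions M A"
proof -
  have P: "finite P" "P \<subseteq> sets M" "\<forall>E\<in>P. E \<subseteq> A" "disjoint P"
    using assms(1) by (auto simp: subpartitions_def)
  then have "A - \<Union>P \<in> sets M"
    using assms(2) by (intro sets.Diff sets.finite_Union) auto
  moreover have "disjoint (extend_to_partition A P)"
    using P(4) unfolding extend_to_partition_def by (auto simp: pairwise_insert disjnt_def)
  ultimately show ?thesis
    using P by (auto simp: subpartitions_def extend_to_partition_def)
qed

lemma Union_extend_to_partition: "P \<in> subpartitions M A \<Longrightarrow> \<Union>(extend_to_partition A P) = A"
  by (auto simp: extend_to_partition_def subpartitions_def)

lemma partition_meet_commute: "partition_meet A P Q = partition_meet A Q P"
  unfolding partition_meet_def by (auto simp: image_iff)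

lemma partition_meet_subpartition:
  assumes "P \<in> subpartitions M A" "Q \<in> subpartitions M A" "A \<in> sets M"
  shows "partition_meet A P Q \<in> subpartitions M A"
proof -
  let ?P = "extend_to_partition A P" and ?Q = "extend_to_partition A Q"
  have P: "finite ?P" "?P \<subseteq> sets M" "\<forall>E\<in>?P. E \<subseteq> A" "disjoint ?P"
    using extend_to_partition_subpartition[OF assms(1,3)] by (auto simp: subpartitions_def)
  have Q: "finite ?Q" "?Q \<subseteq> sets M" "\<forall>E\<in>?Q. E \<subseteq> A" "disjoint ?Q"
    using extend_to_partition_subpartition[OF assms(2,3)] by (auto simp: subpartitions_def)
  have "disjoint (partition_meet A P Q)"
    unfolding partition_meet_def pairwise_def disjnt_def
  proof clarsimp
    fix E F E' F'
    assume "E \<in> ?P" "F \<in> ?Q" "E' \<in> ?P" "F' \<in> ?Q" "E \<inter> F \<noteq> E' \<inter> F'"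
    then show "E \<inter> F \<inter> (E' \<inter> F') = {}"
      using P(4) Q(4) unfolding pairwise_def disjnt_def by blast
  qed
  with P Q show ?thesis
    by (auto simp: subpartitions_def partition_meet_def)
qed

lemma variation_sum_partition_meet:
  assumes "P \<in> subpartitions M A" "Q \<in> subpartitions M A" "A \<in> sets M"
    and "finitely_additive M \<nu>" "is_seminorm q"
  shows "variation_sum q \<nu> (partition_meet A P Q) =
    (\<Sum>E\<in>extend_to_partition A P. \<Sum>F\<in>extend_to_partition A Q. q (\<nu> (E \<inter> F)))"
proof -
  let ?P = "extend_to_partition A P" and ?Q = "extend_to_partition A Q"
  have P: "finite ?P" "disjoint ?P" and Q: "finite ?Q" "disjoint ?Q"
    using extend_to_partition_subpartition[OF assms(1,3)]
      extend_to_partition_subpartition[OF assms(2,3)]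
    by (auto simp: subpartitions_def)
  have q_empty: "q (\<nu> {}) = 0"
    using assms(4,5) by (simp add: finitely_additive_def seminorm_zero)
  have "variation_sum q \<nu> (partition_meet A P Q) = (\<Sum>(E, F)\<in>?P \<times> ?Q. q (\<nu> (E \<inter> F)))"
    unfolding variation_sum_def partition_meet_def
  proof (subst sum.reindex_nontrivial)
    fix x y
    assume xy: "x \<in> ?P \<times> ?Q" "y \<in> ?P \<times> ?Q" "x \<noteq> y"
      "(case x of (E, F) \<Rightarrow> E \<inter> F) = (case y of (E, F) \<Rightarrow> E \<inter> F)"
    obtain E F E' F' where "x = (E, F)" "y = (E', F')"
      by (cases x, cases y)
    moreover have "E \<noteq> E' \<Longrightarrow> E \<inter> E' = {}" "F \<noteq> F' \<Longrightarrow> F \<inter> F' = {}"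
      using xy(1,2) P(2) Q(2) unfolding \<open>x = (E, F)\<close> \<open>y = (E', F')\<close> pairwise_def disjnt_def
      by auto
    ultimately have "E \<inter> F = {}"
      using xy(3,4) by auto
    then show "q (\<nu> (case x of (E, F) \<Rightarrow> E \<inter> F)) = 0"
      using \<open>x = (E, F)\<close> q_empty by simp
  qed (use P Q in \<open>auto intro: sum.cong\<close>)
  also have "\<dots> = (\<Sum>E\<in>?P. \<Sum>F\<in>?Q. q (\<nu> (E \<inter> F)))"
    by (rule sum.cartesian_product[symmetric])
  finally show ?thesis .
qed

lemma seminorm_measure_le_sum_inter:
  assumes "finitely_additive M \<nu>" "is_seminorm q" "Q \<in> subpartitions M A"
    and "E \<in> sets M" "E \<subseteq> \<Union>Q"
  shows "q (\<nu> E) \<le> (\<Sum>F\<in>Q. q (\<nu> (E \<inter> F)))"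
proof -
  have Q: "finite Q" "Q \<subseteq> sets M" "disjoint Q"
    using assms(3) by (auto simp: subpartitions_def)
  have "\<nu> E = \<nu> (\<Union>F\<in>Q. E \<inter> F)"
    using assms(5) by (metis Int_Union Int_absorb2)
  also have "\<dots> = (\<Sum>F\<in>Q. \<nu> (E \<inter> F))"
  proof (rule finitely_additive_sum[OF assms(1) Q(1)])
    show "disjoint_family_on (\<lambda>F. E \<inter> F) Q"
      using Q(3) unfolding disjoint_family_on_def pairwise_def disjnt_def by blast
  qed (use Q(2) assms(4) in auto)
  finally show ?thesis
    using seminorm_sum_le[OF assms(2)] by simp
qed

lemma variation_sum_le_partition_meet:
  assumes "P \<in> subpartitions M A" "Q \<in> subpartitions M A" "A \<in> sets M"
    and "finitely_additive M \<nu>" "is_seminorm q"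
  shows "variation_sum q \<nu> P \<le> variation_sum q \<nu> (partition_meet A P Q)"
proof -
  let ?P = "extend_to_partition A P" and ?Q = "extend_to_partition A Q"
  have P: "finite ?P" "?P \<subseteq> sets M" "P \<subseteq> ?P"
    using extend_to_partition_subpartition[OF assms(1,3)]
    by (auto simp: subpartitions_def extend_to_partition_def)
  have "variation_sum q \<nu> P \<le> (\<Sum>E\<in>?P. q (\<nu> E))"
    unfolding variation_sum_def using P
    by (intro sum_mono2) (auto simp: seminorm_nonneg[OF assms(5)])
  also have "\<dots> \<le> (\<Sum>E\<in>?P. \<Sum>F\<in>?Q. q (\<nu> (E \<inter> F)))"
    using P extend_to_partition_subpartition[OF assms(2,3)] Union_extend_to_partition[OF assms(1)]
      Union_extend_to_partition[OF assms(2)]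
    by (intro sum_mono seminorm_measure_le_sum_inter[OF assms(4,5)]) auto
  also have "\<dots> = variation_sum q \<nu> (partition_meet A P Q)"
    by (rule variation_sum_partition_meet[symmetric, OF assms])
  finally show ?thesis .
qed

lemma total_variation_eq_SUP:
  fixes M :: "'a measure" and \<nu> :: "'a set \<Rightarrow> 'w::real_vector"
  assumes "\<nu> {} = 0" "is_seminorm q"
  shows "total_variation q M \<nu> A = (SUP P\<in>subpartitions M A. ennreal (variation_sum q \<nu> P))"
proof (rule antisym)
  let ?S = "{(m::nat, E). (\<forall>i<m. E i \<in> sets M \<and> E i \<subseteq> A) \<and> disjoint_family_on E {..<m}}"
  show "total_variation q M \<nu> A \<le> (SUP P\<in>subpartitions M A. ennreal (variation_sum q \<nu> P))"
    unfolding total_variation_def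
  proof (rule SUP_least, clarsimp)
    fix m and E :: "nat \<Rightarrow> 'a set"
    assume E: "\<forall>i<m. E i \<in> sets M \<and> E i \<subseteq> A" "disjoint_family_on E {..<m}"
    then have "disjoint (E ` {..<m})"
      unfolding disjoint_family_on_def pairwise_def disjnt_def by (metis imageE)
    with E have P: "E ` {..<m} \<in> subpartitions M A"
      by (auto simp: subpartitions_def)
    have "variation_sum q \<nu> (E ` {..<m}) = (\<Sum>i<m. q (\<nu> (E i)))"
      unfolding variation_sum_def
    proof (subst sum.reindex_nontrivial)
      fix i j
      assume "i \<in> {..<m}" "j \<in> {..<m}" "i \<noteq> j" "E i = E j"
      with E(2) have "E i = {}"
        unfolding disjoint_family_on_def by auto
      then show "q (\<nu> (E i)) = 0"
        using assms by (simp add: seminorm_zero)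
    qed auto
    then have "(\<Sum>i<m. ennreal (q (\<nu> (E i)))) = ennreal (variation_sum q \<nu> (E ` {..<m}))"
      using assms(2) by (simp add: sum_ennreal seminorm_nonneg)
    with P show "(\<Sum>i<m. ennreal (q (\<nu> (E i))))
        \<le> (SUP P\<in>subpartitions M A. ennreal (variation_sum q \<nu> P))"
      by (metis SUP_upper)
  qed
  show "(SUP P\<in>subpartitions M A. ennreal (variation_sum q \<nu> P)) \<le> total_variation q M \<nu> A"
    unfolding total_variation_def
  proof (rule SUP_least)
    fix P
    assume P: "P \<in> subpartitions M A"
    then obtain h where h: "bij_betw h {..<card P} P"
      using ex_bij_betw_nat_finite[of P] by (auto simp: subpartitions_def atLeast0LessThan)
    have "disjoint_family_on h {..<card P}"
      using h P unfolding disjoint_family_on_def bij_betw_def inj_on_def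
      by (auto simp: subpartitions_def pairwise_def disjnt_def)
        (metis IntI empty_iff imageI lessThan_iff)
    moreover have "h i \<in> P" if "i < card P" for i
      using h that by (auto simp: bij_betw_def)
    ultimately have "(card P, h) \<in> ?S"
      using P by (auto simp: subpartitions_def)
    moreover have "ennreal (variation_sum q \<nu> P) = (\<Sum>i<card P. ennreal (q (\<nu> (h i))))"
      unfolding variation_sum_def sum.reindex_bij_betw[OF h, symmetric]
      using assms(2) by (simp add: sum_ennreal seminorm_nonneg)
    ultimately show "ennreal (variation_sum q \<nu> P)
        \<le> (SUP EE\<in>?S. \<Sum>i<fst EE. ennreal (q (\<nu> (snd EE i))))"
      by (auto intro: SUP_upper2[of "(card P, h)"])
  qed
qed

lemma variation_sum_le_total_variation:
  assumes "\<nu> {} = 0" "is_seminorm q" "P \<in> subpartitions M A"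
  shows "ennreal (variation_sum q \<nu> P) \<le> total_variation q M \<nu> A"
proof -
  have "total_variation q M \<nu> A = (SUP P\<in>subpartitions M A. ennreal (variation_sum q \<nu> P))"
    using assms(1,2) by (rule total_variation_eq_SUP)
  then show ?thesis
    using SUP_upper[OF assms(3), of "\<lambda>P. ennreal (variation_sum q \<nu> P)"] by simp
qed

lemma incseq_subpartitions_dominating:
  assumes "countable Q" "Q \<subseteq> subpartitions M A" "A \<in> sets M"
    and "\<And>i. finitely_additive M (\<nu> i)" "is_seminorm q"
  obtains P where "\<And>n. P n \<in> subpartitions M A"
    "\<And>i n. variation_sum q (\<nu> i) (P n) \<le> variation_sum q (\<nu> i) (P (Suc n))"
    "\<And>R. R \<in> Q \<Longrightarrow> \<exists>n. \<forall>i. variation_sum q (\<nu> i) R \<le> variation_sum q (\<nu> i) (P n)"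
proof -
  define R where "R = from_nat_into (insert {} Q)"
  have R_range: "range R = insert {} Q"
    using assms(1) by (simp add: R_def)
  have "insert {} Q \<subseteq> subpartitions M A"
    using assms(2) by (simp add: subpartitions_def)
  then have R: "R n \<in> subpartitions M A" for n
    using R_range by blast
  define P where "P = rec_nat (R 0) (\<lambda>n X. partition_meet A X (R (Suc n)))"
  have P_0: "P 0 = R 0" and P_Suc: "P (Suc n) = partition_meet A (P n) (R (Suc n))" for n
    by (simp_all add: P_def)
  have P: "P n \<in> subpartitions M A" for n
    by (induction n) (simp_all add: P_0 P_Suc R partition_meet_subpartition assms(3))
  have "variation_sum q (\<nu> i) (R n) \<le> variation_sum q (\<nu> i) (P n)" for i n
  proof (cases n)
    case (Suc m)
    show ?thesis
      unfolding Suc P_Suc partition_meet_commute[of A "P m"]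
      by (rule variation_sum_le_partition_meet[OF R P assms(3,4,5)])
  qed (simp add: P_0)
  moreover have "\<exists>n. R n = S" if "S \<in> Q" for S
  proof -
    have "S \<in> range R"
      using that R_range by simp
    then show ?thesis
      by auto
  qed
  ultimately have P_dominates: "\<exists>n. \<forall>i. variation_sum q (\<nu> i) S \<le> variation_sum q (\<nu> i) (P n)"
    if "S \<in> Q" for S
    using that by blast
  have P_mono: "variation_sum q (\<nu> i) (P n) \<le> variation_sum q (\<nu> i) (P (Suc n))" for i n
    unfolding P_Suc by (rule variation_sum_le_partition_meet[OF P R assms(3,4,5)])
  show thesis
    by (rule that[OF P P_mono P_dominates])
qed

lemma total_variation_SUP_sequence:
  fixes M :: "'a measure"
  assumes "\<nu> {} = 0" "is_seminorm q"
  obtains S :: "nat \<Rightarrow> 'a set set" where "range S \<subseteq> subpartitions M A"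
    "total_variation q M \<nu> A = (SUP n. ennreal (variation_sum q \<nu> (S n)))"
proof -
  have "{} \<in> subpartitions M A"
    by (simp add: subpartitions_def)
  then have "subpartitions M A \<noteq> {}"
    by blast
  from ennreal_SUP_countable_SUP[OF this, of "\<lambda>P. ennreal (variation_sum q \<nu> P)"]
  obtain f :: "nat \<Rightarrow> ennreal"
    where f: "range f \<subseteq> (\<lambda>P. ennreal (variation_sum q \<nu> P)) ` subpartitions M A"
      "(SUP P\<in>subpartitions M A. ennreal (variation_sum q \<nu> P)) = Sup (range f)"
    by blast
  have "\<forall>n. \<exists>P\<in>subpartitions M A. f n = ennreal (variation_sum q \<nu> P)"
    using f(1) by blast
  then obtain S where S: "\<And>n. S n \<in> subpartitions M A"
    "\<And>n. f n = ennreal (variation_sum q \<nu> (S n))"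
    by metis
  have "total_variation q M \<nu> A = Sup (range f)"
    using f(2) assms by (simp add: total_variation_eq_SUP)
  also have "range f = range (\<lambda>n. ennreal (variation_sum q \<nu> (S n)))"
    using S(2) by auto
  finally have "total_variation q M \<nu> A = (SUP n. ennreal (variation_sum q \<nu> (S n)))" .
  with S(1) show thesis
    by (intro that) auto
qed

lemma total_variation_SUP_incseq:
  fixes M :: "'a measure"
  assumes "countable C" "A \<in> sets M" "\<And>i. finitely_additive M (\<nu> i)" "is_seminorm q"
  obtains P where "\<And>n. P n \<in> subpartitions M A"
    "\<And>i n. variation_sum q (\<nu> i) (P n) \<le> variation_sum q (\<nu> i) (P (Suc n))"
    "\<And>i. i \<in> C \<Longrightarrow> total_variation q M (\<nu> i) A = (SUP n. ennreal (variation_sum q (\<nu> i) (P n)))"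
proof -
  have "\<exists>S :: nat \<Rightarrow> 'a set set. range S \<subseteq> subpartitions M A \<and>
      total_variation q M (\<nu> i) A = (SUP n. ennreal (variation_sum q (\<nu> i) (S n)))" for i
  proof -
    have "\<nu> i {} = 0"
      using assms(3) by (simp add: finitely_additive_def)
    then obtain S :: "nat \<Rightarrow> 'a set set" where "range S \<subseteq> subpartitions M A"
      "total_variation q M (\<nu> i) A = (SUP n. ennreal (variation_sum q (\<nu> i) (S n)))"
      using assms(4) by (rule total_variation_SUP_sequence)
    then show ?thesis
      by blast
  qed
  then obtain S :: "_ \<Rightarrow> nat \<Rightarrow> 'a set set" where S: "\<And>i. range (S i) \<subseteq> subpartitions M A"
    "\<And>i. total_variation q M (\<nu> i) A = (SUP n. ennreal (variation_sum q (\<nu> i) (S i n)))"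
    by metis
  have "countable (\<Union>i\<in>C. range (S i))" "(\<Union>i\<in>C. range (S i)) \<subseteq> subpartitions M A"
    using assms(1) S(1) by auto
  then obtain P where P: "\<And>n. P n \<in> subpartitions M A"
    "\<And>i n. variation_sum q (\<nu> i) (P n) \<le> variation_sum q (\<nu> i) (P (Suc n))"
    "\<And>R. R \<in> (\<Union>i\<in>C. range (S i)) \<Longrightarrow> \<exists>n. \<forall>i. variation_sum q (\<nu> i) R \<le> variation_sum q (\<nu> i) (P n)"
    by (rule incseq_subpartitions_dominating[where \<nu> = \<nu>, OF _ _ assms(2-4)]) auto
  have "total_variation q M (\<nu> i) A = (SUP n. ennreal (variation_sum q (\<nu> i) (P n)))"
    if "i \<in> C" for i
  proof (rule antisym)
    show "total_variation q M (\<nu> i) A \<le> (SUP n. ennreal (variation_sum q (\<nu> i) (P n)))"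
      unfolding S(2)
    proof (rule SUP_least)
      fix k
      have "S i k \<in> (\<Union>i\<in>C. range (S i))"
        using that by blast
      then obtain n where "variation_sum q (\<nu> i) (S i k) \<le> variation_sum q (\<nu> i) (P n)"
        using P(3) by blast
      then have "ennreal (variation_sum q (\<nu> i) (S i k)) \<le> ennreal (variation_sum q (\<nu> i) (P n))"
        by (rule ennreal_leI)
      also have "\<dots> \<le> (SUP n. ennreal (variation_sum q (\<nu> i) (P n)))"
        by (rule SUP_upper) simp
      finally show "ennreal (variation_sum q (\<nu> i) (S i k))
          \<le> (SUP n. ennreal (variation_sum q (\<nu> i) (P n)))" .
    qed
    show "(SUP n. ennreal (variation_sum q (\<nu> i) (P n))) \<le> total_variation q M (\<nu> i) A"
      using assms(3,4) P(1)
      by (intro SUP_least variation_sum_le_total_variation) (simp_all add: finitely_additive_def)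
  qed
  with P(1,2) show thesis
    by (rule that)
qed

lemma dual_seminorm_upper:
  assumes "\<eta> \<in> dual_space p" "p v \<le> 1"
  shows "blinfun_apply \<eta> v \<le> dual_seminorm p \<eta>"
  unfolding dual_seminorm_def
  using assms by (intro cSup_upper) (auto simp: dual_space_def)

lemma dual_seminorm_nonneg:
  assumes "is_seminorm p" "\<eta> \<in> dual_space p"
  shows "0 \<le> dual_seminorm p \<eta>"
  using dual_seminorm_upper[OF assms(2), of 0] seminorm_zero[OF assms(1)]
  by (simp add: blinfun.zero_right)

lemma abs_blinfun_le_dual_seminorm:
  assumes "is_seminorm p" "\<eta> \<in> dual_space p"
  shows "\<bar>blinfun_apply \<eta> v\<bar> \<le> dual_seminorm p \<eta> * p v"
proof (cases "p v > 0")
  case True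
  have "blinfun_apply \<eta> ((1 / p v) *\<^sub>R v) \<le> dual_seminorm p \<eta>"
    "blinfun_apply \<eta> ((1 / p v) *\<^sub>R (- v)) \<le> dual_seminorm p \<eta>"
    using True assms
    by (auto intro!: dual_seminorm_upper simp: seminorm_scaleR seminorm_minus)
  with True show ?thesis
    by (auto simp: blinfun.scaleR_right blinfun.minus_right field_simps)
next
  case False
  then have pv: "p v = 0"
    using seminorm_nonneg[OF assms(1), of v] by linarith
  have "blinfun_apply \<eta> v = 0"
  proof (rule ccontr)
    assume "blinfun_apply \<eta> v \<noteq> 0"
    moreover have "blinfun_apply \<eta> (((dual_seminorm p \<eta> + 1) / blinfun_apply \<eta> v) *\<^sub>R v)
        \<le> dual_seminorm p \<eta>"
      using assms pv by (intro dual_seminorm_upper) (simp_all add: seminorm_scaleR)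
    ultimately show False
      by (simp add: blinfun.scaleR_right)
  qed
  with pv show ?thesis
    by simp
qed

lemma blinfun_in_span_inner_left_Basis:
  "(\<eta> :: 'v::euclidean_space \<Rightarrow>\<^sub>L real) \<in> span (blinfun_inner_left ` Basis)"
proof -
  have "\<eta> = (\<Sum>i\<in>Basis. blinfun_apply \<eta> i *\<^sub>R blinfun_inner_left i)"
  proof (rule blinfun_eqI)
    fix v :: 'v
    have "blinfun_apply \<eta> v = blinfun_apply \<eta> (\<Sum>i\<in>Basis. (v \<bullet> i) *\<^sub>R i)"
      by (simp add: euclidean_representation)
    then show "blinfun_apply \<eta> v
        = blinfun_apply (\<Sum>i\<in>Basis. blinfun_apply \<eta> i *\<^sub>R blinfun_inner_left i) v"
      by (simp add: blinfun.sum_right blinfun.scaleR_right blinfun.sum_left blinfun.scaleR_left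
          blinfun_inner_left.rep_eq mult.commute)
  qed
  also have "\<dots> \<in> span (blinfun_inner_left ` Basis)"
    by (intro span_sum span_mul span_base) auto
  finally show ?thesis .
qed

lemma finite_spanning_subset_blinfun:
  fixes D :: "('v::euclidean_space \<Rightarrow>\<^sub>L real) set"
  obtains B where "finite B" "B \<subseteq> D" "D \<subseteq> span B"
proof -
  obtain B where B: "B \<subseteq> D" "independent B" "D \<subseteq> span B"
    by (rule maximal_independent_subset)
  moreover have "finite B"
    using independent_span_bound[of "blinfun_inner_left ` Basis" B] B(2)
      blinfun_in_span_inner_left_Basis
    by auto
  ultimately show thesis
    using that by blast
qed

definition rational_combinations :: "'b::real_vector set \<Rightarrow> 'b set" where
  "rational_combinations B = (\<lambda>r. \<Sum>b\<in>B. r b *\<^sub>R b) ` (PiE B (\<lambda>_. \<rat>))"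

lemma countable_rational_combinations: "finite B \<Longrightarrow> countable (rational_combinations B)"
  unfolding rational_combinations_def
  by (intro countable_image countable_PiE countable_rat)

lemma rational_combinationsI:
  assumes "\<And>b. b \<in> B \<Longrightarrow> r b \<in> \<rat>"
  shows "(\<Sum>b\<in>B. r b *\<^sub>R b) \<in> rational_combinations B"
proof -
  have "(\<Sum>b\<in>B. r b *\<^sub>R b) = (\<Sum>b\<in>B. restrict r B b *\<^sub>R b)"
    by (rule sum.cong) auto
  moreover have "restrict r B \<in> PiE B (\<lambda>_. \<rat>)"
    using assms by auto
  ultimately show ?thesis
    unfolding rational_combinations_def by blast
qed

lemma sublinear_sum_le:
  fixes T :: "'b::real_vector \<Rightarrow> ennreal"
  assumes add: "\<And>x y. T (x + y) \<le> T x + T y"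
    and scale: "\<And>c x. T (c *\<^sub>R x) \<le> ennreal \<bar>c\<bar> * T x"
  shows "T (\<Sum>b\<in>B. a b *\<^sub>R b) \<le> (\<Sum>b\<in>B. ennreal \<bar>a b\<bar> * T b)"
proof (induction B rule: infinite_finite_induct)
  case (insert x B)
  have "T (a x *\<^sub>R x + (\<Sum>b\<in>B. a b *\<^sub>R b)) \<le> T (a x *\<^sub>R x) + T (\<Sum>b\<in>B. a b *\<^sub>R b)"
    by (rule add)
  also have "\<dots> \<le> ennreal \<bar>a x\<bar> * T x + (\<Sum>b\<in>B. ennreal \<bar>a b\<bar> * T b)"
    by (intro add_mono scale insert.IH)
  finally show ?case
    using insert.hyps by simp
qed (use scale[of 0 0] in simp_all)

lemma sublinear_le_on_span_if_le_on_rational_combinations: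
  fixes T g :: "'b::real_vector \<Rightarrow> ennreal"
  assumes T_add: "\<And>x y. T (x + y) \<le> T x + T y"
    and T_scale: "\<And>c x. T (c *\<^sub>R x) \<le> ennreal \<bar>c\<bar> * T x"
    and g_add: "\<And>x y. g (x + y) \<le> g x + g y"
    and g_le: "\<And>x. g x \<le> T x"
    and B: "finite B" "\<And>b. b \<in> B \<Longrightarrow> T b < \<infinity>"
    and rational: "\<And>x. x \<in> rational_combinations B \<Longrightarrow> T x \<le> g x"
    and x: "x \<in> span B"
  shows "T x \<le> g x"
proof (rule ennreal_le_epsilon)
  fix e :: real
  assume "0 < e"
  obtain c where c: "x = (\<Sum>b\<in>B. c b *\<^sub>R b)"
    using x span_finite[OF B(1)] by auto
  define k where "k = enn2real (\<Sum>b\<in>B. T b)"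
  have K: "(\<Sum>b\<in>B. T b) = ennreal k" "0 \<le> k"
    using B by (simp_all add: k_def ennreal_enn2real ennreal_sum_less_top less_top)
  define \<epsilon> where "\<epsilon> = e / (2 * k + 1)"
  have "0 < \<epsilon>" "2 * (\<epsilon> * k) \<le> e"
    using \<open>0 < e\<close> K(2) by (auto simp: \<epsilon>_def field_simps)
  have small: "T (\<Sum>b\<in>B. a b *\<^sub>R b) \<le> ennreal (\<epsilon> * k)" if "\<And>b. b \<in> B \<Longrightarrow> \<bar>a b\<bar> \<le> \<epsilon>" for a
  proof -
    have "T (\<Sum>b\<in>B. a b *\<^sub>R b) \<le> (\<Sum>b\<in>B. ennreal \<bar>a b\<bar> * T b)"
      by (rule sublinear_sum_le[OF T_add T_scale])
    also have "\<dots> \<le> (\<Sum>b\<in>B. ennreal \<epsilon> * T b)"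
      by (intro sum_mono mult_right_mono ennreal_leI that) auto
    also have "\<dots> = ennreal (\<epsilon> * k)"
      using K \<open>0 < \<epsilon>\<close> by (simp add: sum_distrib_left[symmetric] ennreal_mult)
    finally show ?thesis .
  qed
  have "\<exists>r\<in>\<rat>. \<bar>c b - r\<bar> < \<epsilon>" for b
  proof -
    obtain r where "r \<in> \<rat>" "c b - \<epsilon> < r" "r < c b + \<epsilon>"
      using Rats_dense_in_real[of "c b - \<epsilon>" "c b + \<epsilon>"] \<open>0 < \<epsilon>\<close> by auto
    then show ?thesis
      by (intro bexI[of _ r]) auto
  qed
  then obtain r where r: "\<And>b. r b \<in> \<rat>" "\<And>b. \<bar>c b - r b\<bar> < \<epsilon>"
    by metis
  define y where "y = (\<Sum>b\<in>B. r b *\<^sub>R b)"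
  have "T (x - y) \<le> ennreal (\<epsilon> * k)" "T (y - x) \<le> ennreal (\<epsilon> * k)"
    using less_imp_le[OF r(2)]
    unfolding c y_def sum_subtractf[symmetric] scaleR_diff_left[symmetric]
    by (auto intro!: small simp: abs_minus_commute)
  have "g y = g (x + (y - x))"
    by simp
  also have "\<dots> \<le> g x + T (y - x)"
    using g_add[of x "y - x"] g_le[of "y - x"] by (meson add_left_mono order_trans)
  finally have gy: "g y \<le> g x + T (y - x)" .
  have "T x \<le> T y + T (x - y)"
    using T_add[of y "x - y"] by simp
  also have "\<dots> \<le> g y + T (x - y)"
    using r(1) by (auto simp: y_def intro!: add_right_mono rational rational_combinationsI)
  also have "\<dots> \<le> g x + (T (y - x) + T (x - y))"
    using gy by (simp add: add.assoc add_right_mono)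
  also have "\<dots> \<le> g x + (ennreal (\<epsilon> * k) + ennreal (\<epsilon> * k))"
    using \<open>T (x - y) \<le> _\<close> \<open>T (y - x) \<le> _\<close> by (intro add_left_mono add_mono)
  also have "ennreal (\<epsilon> * k) + ennreal (\<epsilon> * k) = ennreal (2 * (\<epsilon> * k))"
    using \<open>0 < \<epsilon>\<close> K(2) by (simp add: ennreal_plus[symmetric] del: ennreal_plus)
  also have "g x + \<dots> \<le> g x + ennreal e"
    using \<open>2 * (\<epsilon> * k) \<le> e\<close> by (intro add_left_mono ennreal_leI)
  finally show "T x \<le> g x + ennreal e" .
qed

lemma SUP_add_le_ennreal:
  fixes f g h :: "'i \<Rightarrow> ennreal"
  assumes "\<And>i. i \<in> I \<Longrightarrow> f i \<le> g i + h i"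
  shows "(SUP i\<in>I. f i) \<le> (SUP i\<in>I. g i) + (SUP i\<in>I. h i)"
proof (rule SUP_least)
  fix i
  assume "i \<in> I"
  then have "g i + h i \<le> (SUP i\<in>I. g i) + (SUP i\<in>I. h i)"
    by (intro add_mono SUP_upper)
  with assms \<open>i \<in> I\<close> show "f i \<le> (SUP i\<in>I. g i) + (SUP i\<in>I. h i)"
    by (blast intro: order_trans)
qed

lemma variation_sum_blinfun_add_le:
  "variation_sum abs (\<lambda>E. blinfun_apply (\<eta> + \<zeta>) (\<mu> E)) P
    \<le> variation_sum abs (\<lambda>E. blinfun_apply \<eta> (\<mu> E)) P
      + variation_sum abs (\<lambda>E. blinfun_apply \<zeta> (\<mu> E)) P"
  unfolding variation_sum_def sum.distrib[symmetric]
  by (rule sum_mono) (simp add: blinfun.add_left abs_triangle_ineq)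

lemma variation_sum_blinfun_scaleR:
  "variation_sum abs (\<lambda>E. blinfun_apply (c *\<^sub>R \<eta>) (\<mu> E)) P
    = \<bar>c\<bar> * variation_sum abs (\<lambda>E. blinfun_apply \<eta> (\<mu> E)) P"
  by (simp add: variation_sum_def blinfun.scaleR_left abs_mult sum_distrib_left)

lemma variation_sum_blinfun_le_dual_seminorm:
  assumes "is_seminorm p" "\<eta> \<in> dual_space p"
  shows "variation_sum abs (\<lambda>E. blinfun_apply \<eta> (\<mu> E)) P \<le> dual_seminorm p \<eta> * variation_sum p \<mu> P"
  unfolding variation_sum_def sum_distrib_left
  by (rule sum_mono) (rule abs_blinfun_le_dual_seminorm[OF assms])

lemma total_variation_blinfun_eq_SUP:
  assumes "finitely_additive M \<mu>"
  shows "total_variation abs M (\<lambda>E. blinfun_apply \<eta> (\<mu> E)) A =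
    (SUP P\<in>subpartitions M A. ennreal (variation_sum abs (\<lambda>E. blinfun_apply \<eta> (\<mu> E)) P))"
  using finitely_additive_blinfun[OF assms, of \<eta>] is_seminorm_abs
  by (intro total_variation_eq_SUP) (simp_all add: finitely_additive_def)

lemma total_variation_blinfun_add_le:
  assumes "finitely_additive M \<mu>"
  shows "total_variation abs M (\<lambda>E. blinfun_apply (\<eta> + \<zeta>) (\<mu> E)) A
    \<le> total_variation abs M (\<lambda>E. blinfun_apply \<eta> (\<mu> E)) A
      + total_variation abs M (\<lambda>E. blinfun_apply \<zeta> (\<mu> E)) A"
  unfolding total_variation_blinfun_eq_SUP[OF assms]
  by (rule SUP_add_le_ennreal)
    (simp add: variation_sum_blinfun_add_le ennreal_plus[symmetric]
        variation_sum_nonneg[OF is_seminorm_abs]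
      del: ennreal_plus)

lemma total_variation_blinfun_scaleR:
  assumes "finitely_additive M \<mu>"
  shows "total_variation abs M (\<lambda>E. blinfun_apply (c *\<^sub>R \<eta>) (\<mu> E)) A
    = ennreal \<bar>c\<bar> * total_variation abs M (\<lambda>E. blinfun_apply \<eta> (\<mu> E)) A"
  unfolding total_variation_blinfun_eq_SUP[OF assms] SUP_mult_left_ennreal
  by (simp add: variation_sum_blinfun_scaleR ennreal_mult variation_sum_nonneg[OF is_seminorm_abs])

lemma total_variation_blinfun_le_dual_seminorm:
  assumes "is_seminorm p" "\<eta> \<in> dual_space p" "finitely_additive M \<mu>"
  shows "total_variation abs M (\<lambda>E. blinfun_apply \<eta> (\<mu> E)) A
    \<le> ennreal (dual_seminorm p \<eta>) * total_variation p M \<mu> A"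
proof -
  have L: "total_variation p M \<mu> A = (SUP P\<in>subpartitions M A. ennreal (variation_sum p \<mu> P))"
    using assms(1,3) by (intro total_variation_eq_SUP) (simp_all add: finitely_additive_def)
  show ?thesis
    unfolding total_variation_blinfun_eq_SUP[OF assms(3)] L SUP_mult_left_ennreal
  proof (rule SUP_subset_mono)
    fix P
    have "ennreal (variation_sum abs (\<lambda>E. blinfun_apply \<eta> (\<mu> E)) P)
        \<le> ennreal (dual_seminorm p \<eta> * variation_sum p \<mu> P)"
      by (rule ennreal_leI, rule variation_sum_blinfun_le_dual_seminorm[OF assms(1,2)])
    then show "ennreal (variation_sum abs (\<lambda>E. blinfun_apply \<eta> (\<mu> E)) P)
        \<le> ennreal (dual_seminorm p \<eta>) * ennreal (variation_sum p \<mu> P)"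
      by (simp add: ennreal_mult dual_seminorm_nonneg[OF assms(1,2)]
          variation_sum_nonneg[OF assms(1)])
  qed simp
qed

lemma SUP_variation_sum_blinfun_add_le:
  "(SUP n. ennreal (variation_sum abs (\<lambda>E. blinfun_apply (\<eta> + \<zeta>) (\<mu> E)) (P n)))
    \<le> (SUP n. ennreal (variation_sum abs (\<lambda>E. blinfun_apply \<eta> (\<mu> E)) (P n)))
      + (SUP n. ennreal (variation_sum abs (\<lambda>E. blinfun_apply \<zeta> (\<mu> E)) (P n)))"
  by (rule SUP_add_le_ennreal)
    (simp add: variation_sum_blinfun_add_le ennreal_plus[symmetric]
      variation_sum_nonneg[OF is_seminorm_abs] del: ennreal_plus)

lemma total_variation_blinfun_less_top:
  assumes "is_seminorm p" "\<eta> \<in> dual_space p" "finitely_additive M \<mu>"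
    and "total_variation p M \<mu> A < \<infinity>"
  shows "total_variation abs M (\<lambda>E. blinfun_apply \<eta> (\<mu> E)) A < \<infinity>"
proof -
  have "total_variation abs M (\<lambda>E. blinfun_apply \<eta> (\<mu> E)) A
      \<le> ennreal (dual_seminorm p \<eta>) * total_variation p M \<mu> A"
    using assms(1-3) by (rule total_variation_blinfun_le_dual_seminorm)
  also have "\<dots> < \<infinity>"
    using assms(4) by (simp add: ennreal_mult_less_top)
  finally show ?thesis .
qed

lemma measurable_abs_blinfun_apply:
  assumes "sets \<sigma> = sets (restrict_space borel D)"
  shows "(\<lambda>\<eta>. ennreal \<bar>blinfun_apply \<eta> v\<bar>) \<in> borel_measurable \<sigma>"
proof -
  have "(\<lambda>\<eta>. blinfun_apply \<eta> v) \<in> borel_measurable borel"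
    by (intro borel_measurable_continuous_onI continuous_intros)
  then have "(\<lambda>\<eta>. ennreal \<bar>blinfun_apply \<eta> v\<bar>) \<in> borel_measurable (restrict_space borel D)"
    by (intro measurable_restrict_space1) measurable
  then show ?thesis
    unfolding measurable_cong_sets[OF assms refl] .
qed

lemma nn_integral_variation_sum_zonal:
  assumes "is_seminorm p" "zonal_representation p \<sigma>" "finite P"
  shows "(\<integral>\<^sup>+\<eta>. ennreal (variation_sum abs (\<lambda>E. blinfun_apply \<eta> (\<mu> E)) P) \<partial>\<sigma>)
    = ennreal (variation_sum p \<mu> P)"
proof -
  have "(\<integral>\<^sup>+\<eta>. ennreal (variation_sum abs (\<lambda>E. blinfun_apply \<eta> (\<mu> E)) P) \<partial>\<sigma>)
      = (\<integral>\<^sup>+\<eta>. (\<Sum>E\<in>P. ennreal \<bar>blinfun_apply \<eta> (\<mu> E)\<bar>) \<partial>\<sigma>)"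
    by (simp add: variation_sum_def sum_ennreal)
  also have "\<dots> = (\<Sum>E\<in>P. \<integral>\<^sup>+\<eta>. ennreal \<bar>blinfun_apply \<eta> (\<mu> E)\<bar> \<partial>\<sigma>)"
    using assms(2) unfolding zonal_representation_def
    by (intro nn_integral_sum measurable_abs_blinfun_apply) auto
  also have "\<dots> = ennreal (variation_sum p \<mu> P)"
    using assms(2) seminorm_nonneg[OF assms(1)] unfolding zonal_representation_def
    by (simp flip: sum_ennreal add: variation_sum_def)
  finally show ?thesis .
qed

lemma total_variation_le_nn_integral:
  assumes "is_seminorm p" "zonal_representation p \<sigma>" "finitely_additive M \<mu>"
  shows "total_variation p M \<mu> A \<le> (\<integral>\<^sup>+\<eta>. total_variation abs M (\<lambda>E. blinfun_apply \<eta> (\<mu> E)) A \<partial>\<sigma>)"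
proof -
  have "total_variation p M \<mu> A = (SUP P\<in>subpartitions M A. ennreal (variation_sum p \<mu> P))"
    using assms(1,3) by (intro total_variation_eq_SUP) (simp_all add: finitely_additive_def)
  also have "\<dots> \<le> (\<integral>\<^sup>+\<eta>. total_variation abs M (\<lambda>E. blinfun_apply \<eta> (\<mu> E)) A \<partial>\<sigma>)"
  proof (rule SUP_least)
    fix P
    assume P: "P \<in> subpartitions M A"
    then have "ennreal (variation_sum p \<mu> P)
        = (\<integral>\<^sup>+\<eta>. ennreal (variation_sum abs (\<lambda>E. blinfun_apply \<eta> (\<mu> E)) P) \<partial>\<sigma>)"
      by (intro nn_integral_variation_sum_zonal[OF assms(1,2), symmetric])
        (simp add: subpartitions_def)
    also have "\<dots> \<le> (\<integral>\<^sup>+\<eta>. total_variation abs M (\<lambda>E. blinfun_apply \<eta> (\<mu> E)) A \<partial>\<sigma>)"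
      using P assms(3) finitely_additive_blinfun[OF assms(3)]
      by (intro nn_integral_mono variation_sum_le_total_variation is_seminorm_abs)
        (simp_all add: finitely_additive_def)
    finally show "ennreal (variation_sum p \<mu> P) \<le> \<dots>" .
  qed
  finally show ?thesis .
qed

lemma nn_integral_SUP_variation_sum_le:
  assumes "is_seminorm p" "zonal_representation p \<sigma>" "finitely_additive M \<mu>"
    and P: "\<And>n. P n \<in> subpartitions M A"
    and mono: "\<And>\<eta> n. variation_sum abs (\<lambda>E. blinfun_apply \<eta> (\<mu> E)) (P n)
      \<le> variation_sum abs (\<lambda>E. blinfun_apply \<eta> (\<mu> E)) (P (Suc n))"
  shows "(\<integral>\<^sup>+\<eta>. (SUP n. ennreal (variation_sum abs (\<lambda>E. blinfun_apply \<eta> (\<mu> E)) (P n))) \<partial>\<sigma>)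
    \<le> total_variation p M \<mu> A"
proof -
  have "(\<integral>\<^sup>+\<eta>. (SUP n. ennreal (variation_sum abs (\<lambda>E. blinfun_apply \<eta> (\<mu> E)) (P n))) \<partial>\<sigma>)
      = (SUP n. \<integral>\<^sup>+\<eta>. ennreal (variation_sum abs (\<lambda>E. blinfun_apply \<eta> (\<mu> E)) (P n)) \<partial>\<sigma>)"
  proof (rule nn_integral_monotone_convergence_SUP)
    show "incseq (\<lambda>n \<eta>. ennreal (variation_sum abs (\<lambda>E. blinfun_apply \<eta> (\<mu> E)) (P n)))"
      by (rule incseq_SucI) (simp add: le_fun_def mono ennreal_leI)
    have "sets \<sigma> = sets (restrict_space borel (dual_space p))"
      using assms(2) by (simp add: zonal_representation_def)
    then show "(\<lambda>\<eta>. ennreal (variation_sum abs (\<lambda>E. blinfun_apply \<eta> (\<mu> E)) (P n)))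
        \<in> borel_measurable \<sigma>" for n
      by (simp add: variation_sum_def sum_ennreal[symmetric] del: sum_ennreal)
        (intro borel_measurable_sum measurable_abs_blinfun_apply)
  qed
  also have "\<dots> = (SUP n. ennreal (variation_sum p \<mu> (P n)))"
    using P by (simp add: nn_integral_variation_sum_zonal[OF assms(1,2)] subpartitions_def)
  also have "\<dots> \<le> total_variation p M \<mu> A"
    using assms(1,3) P
    by (intro SUP_least variation_sum_le_total_variation) (simp_all add: finitely_additive_def)
  finally show ?thesis .
qed

text \<open>The integrand need not be measurable; this is why it is compared with the measurable
  function \<open>g\<close> in the proof.\<close>

lemma nn_integral_le_total_variation:
  fixes p :: "'v::euclidean_space \<Rightarrow> real" and \<sigma> :: "('v \<Rightarrow>\<^sub>L real) measure"
  assumes p: "is_seminorm p" and \<sigma>: "zonal_representation p \<sigma>"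
    and \<mu>: "finitely_additive M \<mu>" and A: "A \<in> sets M"
  shows "(\<integral>\<^sup>+\<eta>. total_variation abs M (\<lambda>E. blinfun_apply \<eta> (\<mu> E)) A \<partial>\<sigma>)
    \<le> total_variation p M \<mu> A"
proof (cases "total_variation p M \<mu> A < \<infinity>")
  case True
  define T where "T \<eta> = total_variation abs M (\<lambda>E. blinfun_apply \<eta> (\<mu> E)) A" for \<eta>
  obtain B where B: "finite B" "B \<subseteq> dual_space p" "dual_space p \<subseteq> span B"
    by (rule finite_spanning_subset_blinfun)
  then have "countable (rational_combinations B)"
    by (intro countable_rational_combinations)
  then obtain P where P: "\<And>n. P n \<in> subpartitions M A"
    and mono: "\<And>\<eta> n. variation_sum abs (\<lambda>E. blinfun_apply \<eta> (\<mu> E)) (P n)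
      \<le> variation_sum abs (\<lambda>E. blinfun_apply \<eta> (\<mu> E)) (P (Suc n))"
    and T_SUP: "\<And>\<eta>. \<eta> \<in> rational_combinations B \<Longrightarrow>
      T \<eta> = (SUP n. ennreal (variation_sum abs (\<lambda>E. blinfun_apply \<eta> (\<mu> E)) (P n)))"
    unfolding T_def
    by (rule total_variation_SUP_incseq[where \<nu> = "\<lambda>\<eta> E. blinfun_apply \<eta> (\<mu> E)",
          OF _ A finitely_additive_blinfun[OF \<mu>] is_seminorm_abs]) blast
  define g where
    "g \<eta> = (SUP n. ennreal (variation_sum abs (\<lambda>E. blinfun_apply \<eta> (\<mu> E)) (P n)))" for \<eta>
  have g_le: "g \<eta> \<le> T \<eta>" for \<eta>
    unfolding g_def T_def using \<mu> P
    by (intro SUP_least variation_sum_le_total_variation is_seminorm_abs)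
      (simp_all add: finitely_additive_def blinfun.zero_right)
  have "T \<eta> \<le> g \<eta>" if "\<eta> \<in> space \<sigma>" for \<eta>
  proof (rule sublinear_le_on_span_if_le_on_rational_combinations[where B = B])
    show "T (\<eta> + \<zeta>) \<le> T \<eta> + T \<zeta>" "T (c *\<^sub>R \<eta>) \<le> ennreal \<bar>c\<bar> * T \<eta>" for c \<eta> \<zeta>
      unfolding T_def using \<mu>
      by (simp_all add: total_variation_blinfun_add_le total_variation_blinfun_scaleR)
    show "T b < \<infinity>" if "b \<in> B" for b
      unfolding T_def using p subsetD[OF B(2) that] \<mu> True
      by (rule total_variation_blinfun_less_top)
    show "\<eta> \<in> span B"
      using that \<sigma> B(3) sets_eq_imp_space_eq[of \<sigma> "restrict_space borel (dual_space p)"]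
      by (auto simp: zonal_representation_def space_restrict_space)
  qed (use g_le B(1) T_SUP in \<open>auto simp: g_def SUP_variation_sum_blinfun_add_le\<close>)
  then have "(\<integral>\<^sup>+\<eta>. T \<eta> \<partial>\<sigma>) \<le> (\<integral>\<^sup>+\<eta>. g \<eta> \<partial>\<sigma>)"
    by (rule nn_integral_mono)
  also have "\<dots> \<le> total_variation p M \<mu> A"
    unfolding g_def using p \<sigma> \<mu> P mono by (rule nn_integral_SUP_variation_sum_le)
  finally show ?thesis
    by (simp add: T_def)
qed (simp add: less_top[symmetric])

theorem lemma4p2:
  fixes p :: "'v::euclidean_space \<Rightarrow> real"
    and \<sigma> :: "('v \<Rightarrow>\<^sub>L real) measure"
    and M :: "'a measure"
    and \<mu> :: "'a set \<Rightarrow> 'v"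
  assumes "is_seminorm p"
    and "zonal_representation p \<sigma>"
    and "vector_measure M \<mu>"
    and "A \<in> sets M"
  shows "total_variation p M \<mu> A =
    (\<integral>\<^sup>+ \<eta>. total_variation abs M (\<lambda>E. blinfun_apply \<eta> (\<mu> E)) A \<partial>\<sigma>)"
proof -
  have "finitely_additive M \<mu>"
    using assms(3) by (rule vector_measure_finitely_additive)
  with assms show ?thesis
    by (intro antisym total_variation_le_nn_integral nn_integral_le_total_variation)
qed

end
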